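(* Let $D^k$ be a vertically mapped wedge with $J^k>0$. Define $(\bm S^k_z)_{ij,i'j'}=\int_{\widehat W}\frac{\partial\phi_{i'j'}}{\partial z}\,\ell_{ij}\,J^k$, where $\phi_{i'j'}=\ell_{i'j'}\circ(\bm\Phi^k)^{-1}$, and $\bm D^k_z=(\bm M^k)^{-1}\bm S^k_z$. Then $$\bm D^k_z=\bm L^{\mathrm{tri},k}\otimes\big(t_zJ^k\,\bm D^{\mathrm{1D}}_t\big),$$ where $t_zJ^k$ is the (constant) product of the geometric factor $t_z=\partial t/\partial z$ with $J^k$, and $\bm L^{\mathrm{tri},k}=(\bm M^{\mathrm{tri},k})^{-1}\widehat{\bm M}^{\mathrm{tri}}$.
   Context: Reference wedge $\widehat W=\widehat T\times[0,1]$ with $\widehat T=\{(r,s):r,s\ge0,\ r+s\le1\}$. Vertex functions $v_1=(1-r-s)(1-t)$, $v_2=r(1-t)$, $v_3=s(1-t)$, $v_4=(1-r-s)t$, $v_5=rt$, $v_6=st$; a wedge $D^k$ is the image of $\widehat W$ under $\bm{\Phi}^k=\sum_{i=1}^6\bm{\nu}_iv_i$ with vertices $\bm{\nu}_i\in\mathbb{R}^3$, $(x,y,z)=\bm\Phi^k(r,s,t)$, and $J^k=\det[\partial_r\bm{\Phi}^k,\partial_s\bm{\Phi}^k,\partial_t\bm{\Phi}^k]$. It is vertically mapped if the pairs $(\bm{\nu}_1,\bm{\nu}_4)$, $(\bm{\nu}_2,\bm{\nu}_5)$, $(\bm{\nu}_3,\bm{\nu}_6)$ each have identical $x$- and $y$-coordinates.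 Geometric factors $r_z=\partial r/\partial z$, $t_z=\partial t/\partial z$, etc., are entries of the inverse Jacobian matrix of $\bm\Phi^k$. Nodal basis: fix $N\ge1$, points $(r_i,s_i)$, $i=1,\dots,(N+1)(N+2)/2$, in $\widehat T$ unisolvent for polynomials of total degree $\le N$ with Lagrange basis $\ell^{\mathrm{tri}}_i$, and Gauss–Legendre–Lobatto points $0=t_0<\dots<t_N=1$ with Lagrange basis $\ell^{\mathrm{1D}}_j$; $\ell_{ij}=\ell^{\mathrm{tri}}_i(r,s)\ell^{\mathrm{1D}}_j(t)$. Matrices indexed by $(i,j)$ are ordered with $i$ the slow index, so $(\bm A\otimes\bm B)_{ij,i'j'}=\bm A_{ii'}\bm B_{jj'}$. Definitions: $(\bm M^k)_{ij,i'j'}=\int_{\widehat W}\ell_{ij}\ell_{i'j'}J^k$; $(\bm M^{\mathrm{tri},k})_{ii'}=\int_{\widehat T}\ell^{\mathrm{tri}}_i\ell^{\mathrm{tri}}_{i'}J^k(r,s)$ (where $J^k$ is independent of $t$ for vertically mapped wedges); $(\widehat{\bm M}^{\mathrm{tri}})_{ii'}=\int_{\widehat T}\ell^{\mathrm{tri}}_i\ell^{\mathrm{tri}}_{i'}$; $(\bm D^{\mathrm{1D}}_t)_{jj'}=(\ell^{\mathrm{1D}}_{j'})'(t_j)$. *)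

theory Defs
  imports "HOL-Analysis.Analysis" "HOL-Computational_Algebra.Polynomial"
begin

definition ref_tri :: "(real^2) set" where
  "ref_tri = {p. p$1 \<ge> 0 \<and> p$2 \<ge> 0 \<and> p$1 + p$2 \<le> 1}"

definition ref_wedge :: "(real^3) set" where
  "ref_wedge = {p. p$1 \<ge> 0 \<and> p$2 \<ge> 0 \<and> p$1 + p$2 \<le> 1 \<and> 0 \<le> p$3 \<and> p$3 \<le> 1}"

definition vfun :: "nat \<Rightarrow> real^3 \<Rightarrow> real" where
  "vfun i p = (let r = p$1; s = p$2; t = p$3 in
     (if i = 1 then (1 - r - s) * (1 - t) else
      if i = 2 then r * (1 - t) else
      if i = 3 then s * (1 - t) else
      if i = 4 then (1 - r - s) * t else
      if i = 5 then r * t else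
      if i = 6 then s * t else 0))"

definition wedge_map :: "(nat \<Rightarrow> real^3) \<Rightarrow> real^3 \<Rightarrow> real^3" where
  "wedge_map \<nu> p = (\<Sum>i\<in>{1..6}. vfun i p *\<^sub>R \<nu> i)"

definition vertically_mapped :: "(nat \<Rightarrow> real^3) \<Rightarrow> bool" where
  "vertically_mapped \<nu> \<longleftrightarrow>
     (\<forall>i\<in>{1,2,3}. (\<nu> i)$1 = (\<nu> (i+3))$1 \<and> (\<nu> i)$2 = (\<nu> (i+3))$2)"

definition wedge_J :: "(nat \<Rightarrow> real^3) \<Rightarrow> real^3 \<Rightarrow> real" where
  "wedge_J \<nu> p = det (jacobian (wedge_map \<nu>) (at p))"

text \<open>Geometric factor t_z = dt/dz: entry (t,z) of the inverse Jacobian matrix.\<close>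
definition geo_tz :: "(nat \<Rightarrow> real^3) \<Rightarrow> real^3 \<Rightarrow> real" where
  "geo_tz \<nu> p = (matrix_inv (jacobian (wedge_map \<nu>) (at p))) $ 3 $ 3"

definition pdz :: "(real^3 \<Rightarrow> real) \<Rightarrow> real^3 \<Rightarrow> real" where
  "pdz f q = deriv (\<lambda>z. f (\<chi> k. if k = 3 then z else q $ k)) (q $ 3)"

definition poly2_deg_le :: "nat \<Rightarrow> (real \<Rightarrow> real \<Rightarrow> real) \<Rightarrow> bool" where
  "poly2_deg_le N f \<longleftrightarrow> (\<exists>c :: nat \<Rightarrow> nat \<Rightarrow> real.
     \<forall>r s. f r s = (\<Sum>(a,b)\<in>{(a,b). a + b \<le> N}. c a b * r ^ a * s ^ b))"

definition ntri :: "nat \<Rightarrow> nat" where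
  "ntri N = (N + 1) * (N + 2) div 2"

definition unisolvent_tri :: "nat \<Rightarrow> (nat \<Rightarrow> real) \<Rightarrow> (nat \<Rightarrow> real) \<Rightarrow> bool" where
  "unisolvent_tri N pr ps \<longleftrightarrow>
     (\<forall>i\<in>{1..ntri N}. pr i \<ge> 0 \<and> ps i \<ge> 0 \<and> pr i + ps i \<le> 1) \<and>
     (\<forall>f. poly2_deg_le N f \<and> (\<forall>i\<in>{1..ntri N}. f (pr i) (ps i) = 0) \<longrightarrow> (\<forall>r s. f r s = 0))"

definition lagrange_tri :: "nat \<Rightarrow> (nat \<Rightarrow> real) \<Rightarrow> (nat \<Rightarrow> real) \<Rightarrow> (nat \<Rightarrow> real \<Rightarrow> real \<Rightarrow> real) \<Rightarrow> bool" where
  "lagrange_tri N pr ps ltri \<longleftrightarrow>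
     (\<forall>i\<in>{1..ntri N}. poly2_deg_le N (ltri i) \<and>
        (\<forall>i'\<in>{1..ntri N}. ltri i (pr i') (ps i') = (if i = i' then 1 else 0)))"

text \<open>Gauss-Legendre-Lobatto points on [0,1]: 0 = t_0 < ... < t_N = 1, interior points are the
  images under xi -> (xi+1)/2 of the roots of P_N', P_N the Legendre polynomial
  (Rodrigues: P_N proportional to the N-th derivative of (x^2-1)^N).\<close>
definition gll_points :: "nat \<Rightarrow> (nat \<Rightarrow> real) \<Rightarrow> bool" where
  "gll_points N tt \<longleftrightarrow>
     tt 0 = 0 \<and> tt N = 1 \<and> (\<forall>j<N. tt j < tt (Suc j)) \<and>
     (\<forall>j. 0 < j \<and> j < N \<longrightarrow>
        poly (pderiv ((pderiv ^^ N) ([:-1, 0, 1:] ^ N))) (2 * tt j - 1) = 0)"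

definition lagrange_1d :: "nat \<Rightarrow> (nat \<Rightarrow> real) \<Rightarrow> (nat \<Rightarrow> real poly) \<Rightarrow> bool" where
  "lagrange_1d N tt l1 \<longleftrightarrow>
     (\<forall>j\<in>{0..N}. degree (l1 j) \<le> N \<and>
        (\<forall>j'\<in>{0..N}. poly (l1 j) (tt j') = (if j = j' then 1 else 0)))"

definition lwedge :: "(nat \<Rightarrow> real \<Rightarrow> real \<Rightarrow> real) \<Rightarrow> (nat \<Rightarrow> real poly) \<Rightarrow> nat \<times> nat \<Rightarrow> real^3 \<Rightarrow> real" where
  "lwedge ltri l1 ij p = ltri (fst ij) (p$1) (p$2) * poly (l1 (snd ij)) (p$3)"

text \<open>Matrices are functions of (row, column) index; only entries in I x I matter.\<close>
definition mprod :: "'i set \<Rightarrow> ('i \<Rightarrow> 'i \<Rightarrow> real) \<Rightarrow> ('i \<Rightarrow> 'i \<Rightarrow> real) \<Rightarrow> 'i \<Rightarrow> 'i \<Rightarrow> real" where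
  "mprod I A B = (\<lambda>a c. \<Sum>b\<in>I. A a b * B b c)"

definition is_minv :: "'i set \<Rightarrow> ('i \<Rightarrow> 'i \<Rightarrow> real) \<Rightarrow> ('i \<Rightarrow> 'i \<Rightarrow> real) \<Rightarrow> bool" where
  "is_minv I A B \<longleftrightarrow> (\<forall>a\<in>I. \<forall>c\<in>I.
      mprod I A B a c = (if a = c then 1 else 0) \<and> mprod I B A a c = (if a = c then 1 else 0))"

definition minv :: "'i set \<Rightarrow> ('i \<Rightarrow> 'i \<Rightarrow> real) \<Rightarrow> 'i \<Rightarrow> 'i \<Rightarrow> real" where
  "minv I A = (\<lambda>a c. if a \<in> I \<and> c \<in> I then (SOME B. is_minv I A B) a c else 0)"

definition kron :: "(nat \<Rightarrow> nat \<Rightarrow> real) \<Rightarrow> (nat \<Rightarrow> nat \<Rightarrow> real) \<Rightarrow> nat \<times> nat \<Rightarrow> nat \<times> nat \<Rightarrow> real" where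
  "kron A B = (\<lambda>(i,j) (i',j'). A i i' * B j j')"

definition mass_wedge where
  "mass_wedge \<nu> ltri l1 = (\<lambda>ij ij'. integral ref_wedge
      (\<lambda>p. lwedge ltri l1 ij p * lwedge ltri l1 ij' p * wedge_J \<nu> p))"

text \<open>J^k(r,s) for vertically mapped wedges (independent of t); evaluated at t = 0.\<close>
definition mass_tri where
  "mass_tri \<nu> ltri = (\<lambda>i i'. integral ref_tri
      (\<lambda>q. ltri i (q$1) (q$2) * ltri i' (q$1) (q$2) * wedge_J \<nu> (vector [q$1, q$2, 0])))"

definition mass_ref_tri where
  "mass_ref_tri ltri = (\<lambda>i i'. integral ref_tri (\<lambda>q. ltri i (q$1) (q$2) * ltri i' (q$1) (q$2)))"

definition D1d where
  "D1d tt l1 = (\<lambda>j j'. poly (pderiv (l1 j')) (tt j))"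

definition phys_basis where
  "phys_basis \<nu> ltri l1 ij = (\<lambda>x. lwedge ltri l1 ij (inv_into ref_wedge (wedge_map \<nu>) x))"

definition stiff_z where
  "stiff_z \<nu> ltri l1 = (\<lambda>ij ij'. integral ref_wedge
      (\<lambda>p. pdz (phys_basis \<nu> ltri l1 ij') (wedge_map \<nu> p) * lwedge ltri l1 ij p * wedge_J \<nu> p))"

definition wedge_idx :: "nat \<Rightarrow> (nat \<times> nat) set" where
  "wedge_idx N = {1..ntri N} \<times> {0..N}"

end

theory Submission
  imports Defs "Jordan_Normal_Form.Determinant"
begin

text \<open>
  For a vertically mapped wedge, \<open>x\<close> and \<open>y\<close> depend affinely on \<open>(r,s)\<close> alone and
  \<open>z = z\<^sub>0(r,s) + t h(r,s)\<close>, where \<open>h\<close> interpolates the lengths of the three vertical edges.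
  The Jacobian matrix is therefore block triangular: \<open>J = B h\<close> with \<open>B\<close> the determinant of the
  horizontal part, and \<open>t\<^sub>z = 1/h\<close>, so \<open>t\<^sub>z J = B\<close> is constant. On the reference wedge the
  \<open>z\<close>-derivative of the physical basis function \<open>\<ell>\<^sub>k(r,s) \<ell>\<^sub>l(t)\<close> is \<open>\<ell>\<^sub>k \<ell>\<^sub>l' / h\<close>, and
  \<open>h\<close> cancels against \<open>J\<close>. By Fubini the mass matrix factors as \<open>M\<^sup>t\<^sup>r\<^sup>i \<otimes> M\<^sup>1\<^sup>D\<close> and the
  stiffness matrix as \<open>B M\<^sup>r\<^sup>e\<^sup>f \<otimes> K\<close> with \<open>K\<^sub>j\<^sub>l = \<integral>\<^sub>0\<^sup>1 \<ell>\<^sub>j \<ell>\<^sub>l'\<close>. Finally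
  \<open>(M\<^sup>1\<^sup>D)\<^sup>-\<^sup>1 K = D\<^sup>1\<^sup>D\<^sub>t\<close>, because interpolation at the \<open>N + 1\<close> nodes reproduces \<open>\<ell>\<^sub>l'\<close>,
  a polynomial of degree \<open>< N\<close>. Both mass matrices are Gram matrices of linearly independent
  functions for a positive weight, hence invertible.
\<close>

section \<open>Matrices over finite index sets\<close>

lemma ex_is_minv_if_inj:
  fixes A :: "'i \<Rightarrow> 'i \<Rightarrow> real"
  assumes fin: "finite I"
    and inj: "\<And>v. \<forall>a\<in>I. (\<Sum>b\<in>I. A a b * v b) = 0 \<Longrightarrow> \<forall>b\<in>I. v b = 0"
  shows "\<exists>B. is_minv I A B"
proof -
  define n where "n = card I"
  obtain f where bij: "bij_betw f {0..<n} I"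
    using ex_bij_betw_nat_finite[OF fin] n_def by blast
  define g where "g = inv_into {0..<n} f"
  have fg: "\<And>a. a \<in> I \<Longrightarrow> f (g a) = a" and gI: "\<And>a. a \<in> I \<Longrightarrow> g a < n"
    and gf: "\<And>i. i < n \<Longrightarrow> g (f i) = i" and fI: "\<And>i. i < n \<Longrightarrow> f i \<in> I"
    using bij unfolding g_def bij_betw_def
    by (auto simp: f_inv_into_f inv_into_into inv_into_f_f)
  define Am :: "real Matrix.mat" where "Am = Matrix.mat n n (\<lambda>(i,j). A (f i) (f j))"
  have Am: "Am \<in> carrier_mat n n" by (simp add: Am_def)
  have reidx: "\<And>h. (\<Sum>b\<in>I. h b) = (\<Sum>j\<in>{0..<n}. h (f j))"
    using sum.reindex_bij_betw[OF bij] by metis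
  have "Determinant.det Am \<noteq> 0"
  proof
    assume "Determinant.det Am = 0"
    then obtain v where v: "v \<in> carrier_vec n" "v \<noteq> 0\<^sub>v n" "Am *\<^sub>v v = 0\<^sub>v n"
      using det_0_iff_vec_prod_zero_field[OF Am] by blast
    define w where "w b = v $ (g b)" for b
    have "\<forall>a\<in>I. (\<Sum>b\<in>I. A a b * w b) = 0"
    proof
      fix a assume a: "a \<in> I"
      have "(\<Sum>b\<in>I. A a b * w b) = (\<Sum>j\<in>{0..<n}. A a (f j) * v $ j)"
        by (subst reidx) (simp add: w_def gf)
      also have "\<dots> = (Am *\<^sub>v v) $ (g a)"
        using v(1) gI[OF a] by (simp add: Am_def scalar_prod_def fg[OF a])
      also have "\<dots> = 0" using v(3) gI[OF a] by simp
      finally show "(\<Sum>b\<in>I. A a b * w b) = 0" .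
    qed
    then have "\<forall>b\<in>I. w b = 0" by (rule inj)
    then have "v $ i = 0" if "i < n" for i
      using fI[OF that] gf[OF that] by (force simp: w_def)
    then have "v = 0\<^sub>v n" using v(1) by (intro eq_vecI) auto
    with v(2) show False by simp
  qed
  then have "Am \<in> Units (ring_mat TYPE(real) n ())"
    by (rule det_non_zero_imp_unit[OF Am])
  then obtain Bm where Bm: "Bm \<in> carrier_mat n n" "Bm * Am = 1\<^sub>m n" "Am * Bm = 1\<^sub>m n"
    by (auto simp: Units_def ring_mat_def)
  have entry: "(X * Y) $$ (g a, g c) = (\<Sum>b\<in>I. X $$ (g a, g b) * Y $$ (g b, g c))"
    if "X \<in> carrier_mat n n" "Y \<in> carrier_mat n n" "a \<in> I" "c \<in> I" for X Y a c
    using that gI by (subst index_mult_mat(1)) (auto simp: scalar_prod_def reidx gf)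
  have Am_entry: "Am $$ (g a, g c) = A a c" if "a \<in> I" "c \<in> I" for a c
    using that by (simp add: Am_def gI fg)
  have unit: "(1\<^sub>m n :: real Matrix.mat) $$ (g a, g c) = (if a = c then 1 else 0)"
    if "a \<in> I" "c \<in> I" for a c
    using that gI fg by (metis index_one_mat(1))
  define B where "B a c = Bm $$ (g a, g c)" for a c
  have "is_minv I A B"
    unfolding is_minv_def
  proof (intro ballI conjI)
    fix a c assume ac: "a \<in> I" "c \<in> I"
    have "mprod I A B a c = (Am * Bm) $$ (g a, g c)"
      unfolding mprod_def entry[OF Am Bm(1) ac] using ac by (intro sum.cong) (auto simp: B_def Am_entry)
    then show "mprod I A B a c = (if a = c then 1 else 0)" using Bm(3) unit[OF ac] by simp
    have "mprod I B A a c = (Bm * Am) $$ (g a, g c)"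
      unfolding mprod_def entry[OF Bm(1) Am ac] using ac by (intro sum.cong) (auto simp: B_def Am_entry)
    then show "mprod I B A a c = (if a = c then 1 else 0)" using Bm(2) unit[OF ac] by simp
  qed
  then show ?thesis by blast
qed

no_notation Matrix.vec_index (infixl "$" 100)

lemma mprod_assoc:
  assumes "finite I"
  shows "mprod I (mprod I A B) C a c = mprod I A (mprod I B C) a c"
  unfolding mprod_def
  by (simp add: sum_distrib_left sum_distrib_right mult.assoc) (rule sum.swap)

lemma mprod_cong:
  assumes "\<And>b. b \<in> I \<Longrightarrow> A a b = A' a b" "\<And>b. b \<in> I \<Longrightarrow> B b c = B' b c"
  shows "mprod I A B a c = mprod I A' B' a c"
  unfolding mprod_def using assms by simp

lemma is_minv_mprod_cancel_left:
  assumes "finite I" "is_minv I A B" "a \<in> I"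
  shows "mprod I B (mprod I A C) a c = C a c"
proof -
  have "mprod I B (mprod I A C) a c = mprod I (mprod I B A) C a c"
    by (rule mprod_assoc[OF assms(1), symmetric])
  also have "\<dots> = (\<Sum>b\<in>I. if a = b then C b c else 0)"
    unfolding mprod_def[of I "mprod I B A"] using assms(2,3)
    by (intro sum.cong) (auto simp: is_minv_def)
  also have "\<dots> = C a c" using assms(1,3) by simp
  finally show ?thesis .
qed

lemma is_minv_unique:
  assumes fin: "finite I" and B: "is_minv I A B" and B': "is_minv I A B'"
    and a: "a \<in> I" and c: "c \<in> I"
  shows "B a c = B' a c"
proof -
  have "mprod I B (mprod I A B') a c = (\<Sum>b\<in>I. if b = c then B a b else 0)"
    unfolding mprod_def[of I B] using B' c by (intro sum.cong) (auto simp: is_minv_def)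
  also have "\<dots> = B a c" using c fin by simp
  finally show ?thesis using is_minv_mprod_cancel_left[OF fin B a] by simp
qed

lemma is_minv_minv:
  assumes "\<exists>B. is_minv I A B"
  shows "is_minv I A (minv I A)"
proof -
  define B where "B = (SOME B. is_minv I A B)"
  have B: "is_minv I A B" using assms unfolding B_def by (rule someI_ex)
  have "mprod I X (minv I A) a c = mprod I X B a c"
    "mprod I (minv I A) X a c = mprod I B X a c" if "a \<in> I" "c \<in> I" for X a c
    using that unfolding mprod_def minv_def B_def by (auto intro!: sum.cong)
  with B show ?thesis unfolding is_minv_def by simp
qed

lemma minv_eq:
  assumes "finite I" "is_minv I A B" "a \<in> I" "c \<in> I"
  shows "minv I A a c = B a c"
  using is_minv_unique[OF assms(1) is_minv_minv assms(2-4)] assms(2) by blast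

lemma minv_cong:
  assumes "\<And>a c. a \<in> I \<Longrightarrow> c \<in> I \<Longrightarrow> A a c = A' a c"
  shows "minv I A = minv I A'"
proof -
  have eq: "is_minv I A = is_minv I A'"
    unfolding is_minv_def mprod_def using assms by (auto intro!: sum.cong ball_cong)
  show ?thesis unfolding minv_def eq ..
qed

lemma mprod_kron:
  assumes "finite I" "finite J"
  shows "mprod (I \<times> J) (kron A B) (kron C D) (i,j) (i',j') = mprod I A C i i' * mprod J B D j j'"
proof -
  have "mprod I A C i i' * mprod J B D j j' = (\<Sum>x\<in>I. \<Sum>y\<in>J. (A i x * C x i') * (B j y * D y j'))"
    unfolding mprod_def by (simp add: sum_product)
  also have "\<dots> = (\<Sum>(x,y)\<in>I \<times> J. (A i x * C x i') * (B j y * D y j'))"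
    by (rule sum.cartesian_product)
  also have "\<dots> = mprod (I \<times> J) (kron A B) (kron C D) (i,j) (i',j')"
    unfolding mprod_def kron_def by (intro sum.cong) (auto simp: mult_ac)
  finally show ?thesis by simp
qed

lemma is_minv_kron:
  assumes "finite I" "finite J" "is_minv I A A'" "is_minv J B B'"
  shows "is_minv (I \<times> J) (kron A B) (kron A' B')"
  unfolding is_minv_def
proof (intro ballI)
  fix a c assume "a \<in> I \<times> J" "c \<in> I \<times> J"
  then obtain i j i' j' where "a = (i,j)" "c = (i',j')" "i \<in> I" "j \<in> J" "i' \<in> I" "j' \<in> J"
    by auto
  then show "mprod (I \<times> J) (kron A B) (kron A' B') a c = (if a = c then 1 else 0) \<and>
             mprod (I \<times> J) (kron A' B') (kron A B) a c = (if a = c then 1 else 0)"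
    using assms by (simp add: mprod_kron is_minv_def)
qed

lemma mprod_minv_kron:
  assumes fin: "finite I" "finite J"
    and A: "is_minv I A (minv I A)" and B: "is_minv J B (minv J B)"
    and M: "\<And>a b. a \<in> I \<times> J \<Longrightarrow> b \<in> I \<times> J \<Longrightarrow> M a b = kron A B a b"
    and S: "\<And>a b. a \<in> I \<times> J \<Longrightarrow> b \<in> I \<times> J \<Longrightarrow> S a b = kron C D a b"
    and ij: "(i,j) \<in> I \<times> J" "(i',j') \<in> I \<times> J"
  shows "mprod (I \<times> J) (minv (I \<times> J) M) S (i,j) (i',j')
    = mprod I (minv I A) C i i' * mprod J (minv J B) D j j'"
proof -
  have inv: "is_minv (I \<times> J) (kron A B) (kron (minv I A) (minv J B))"
    by (rule is_minv_kron[OF fin A B])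
  have "minv (I \<times> J) M = minv (I \<times> J) (kron A B)"
    by (rule minv_cong) (rule M)
  then have "mprod (I \<times> J) (minv (I \<times> J) M) S (i,j) (i',j')
      = mprod (I \<times> J) (kron (minv I A) (minv J B)) (kron C D) (i,j) (i',j')"
    using minv_eq[OF finite_cartesian_product[OF fin] inv] ij S
    by (intro mprod_cong) auto
  then show ?thesis by (simp add: mprod_kron[OF fin])
qed

section \<open>Geometry of a vertically mapped wedge\<close>

definition base_det :: "(nat \<Rightarrow> real^3) \<Rightarrow> real" where
  "base_det \<nu> = (\<nu> 2$1 - \<nu> 1$1) * (\<nu> 3$2 - \<nu> 1$2) - (\<nu> 3$1 - \<nu> 1$1) * (\<nu> 2$2 - \<nu> 1$2)"

definition wedge_bottom :: "(nat \<Rightarrow> real^3) \<Rightarrow> real \<Rightarrow> real \<Rightarrow> real" where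
  "wedge_bottom \<nu> r s = (1 - r - s) * \<nu> 1$3 + r * \<nu> 2$3 + s * \<nu> 3$3"

definition wedge_height :: "(nat \<Rightarrow> real^3) \<Rightarrow> real \<Rightarrow> real \<Rightarrow> real" where
  "wedge_height \<nu> r s = (1 - r - s) * (\<nu> 4$3 - \<nu> 1$3) + r * (\<nu> 5$3 - \<nu> 2$3) + s * (\<nu> 6$3 - \<nu> 3$3)"

definition wedge_map_deriv :: "(nat \<Rightarrow> real^3) \<Rightarrow> real^3 \<Rightarrow> real^3 \<Rightarrow> real^3" where
  "wedge_map_deriv \<nu> p h =
     (-(h$1 + h$2) * (1 - p$3) - (1 - p$1 - p$2) * h$3) *\<^sub>R \<nu> 1 + (h$1 * (1 - p$3) - p$1 * h$3) *\<^sub>R \<nu> 2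
     + (h$2 * (1 - p$3) - p$2 * h$3) *\<^sub>R \<nu> 3 + (-(h$1 + h$2) * p$3 + (1 - p$1 - p$2) * h$3) *\<^sub>R \<nu> 4
     + (h$1 * p$3 + p$1 * h$3) *\<^sub>R \<nu> 5 + (h$2 * p$3 + p$2 * h$3) *\<^sub>R \<nu> 6"

lemma wedge_map_expand:
  "wedge_map \<nu> p = ((1 - p$1 - p$2) * (1 - p$3)) *\<^sub>R \<nu> 1 + (p$1 * (1 - p$3)) *\<^sub>R \<nu> 2
     + (p$2 * (1 - p$3)) *\<^sub>R \<nu> 3 + ((1 - p$1 - p$2) * p$3) *\<^sub>R \<nu> 4
     + (p$1 * p$3) *\<^sub>R \<nu> 5 + (p$2 * p$3) *\<^sub>R \<nu> 6"
proof -
  have "{1..6::nat} = {1,2,3,4,5,6}"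
    by (simp add: numeral_eq_Suc atLeastAtMostSuc_conv insert_commute)
  then show ?thesis by (simp add: wedge_map_def vfun_def Let_def add.assoc)
qed

lemma has_derivative_vec_nth:
  "((\<lambda>x::real^'n. x $ i) has_derivative (\<lambda>x. x $ i)) F"
  by (rule bounded_linear_imp_has_derivative) (rule bounded_linear_vec_nth)

lemma wedge_map_has_derivative:
  "(wedge_map \<nu> has_derivative wedge_map_deriv \<nu> p) (at p within S)"
  unfolding wedge_map_expand[abs_def] wedge_map_deriv_def
  by (rule has_derivative_eq_rhs,
      (rule has_derivative_add has_derivative_scaleR_left has_derivative_mult has_derivative_diff
        has_derivative_const has_derivative_vec_nth)+)
    (auto simp: fun_eq_iff algebra_simps)

lemma vertically_mapped_coords:
  assumes "vertically_mapped \<nu>"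
  shows "\<nu> 4 $ 1 = \<nu> 1 $ 1" "\<nu> 4 $ 2 = \<nu> 1 $ 2" "\<nu> 5 $ 1 = \<nu> 2 $ 1" "\<nu> 5 $ 2 = \<nu> 2 $ 2"
    "\<nu> 6 $ 1 = \<nu> 3 $ 1" "\<nu> 6 $ 2 = \<nu> 3 $ 2"
  using assms unfolding vertically_mapped_def
  by (auto dest: bspec[where x=1] bspec[where x=2] bspec[where x=3])

lemma wedge_map_coords:
  assumes "vertically_mapped \<nu>"
  shows "wedge_map \<nu> p $ 1 = \<nu> 1$1 + p$1 * (\<nu> 2$1 - \<nu> 1$1) + p$2 * (\<nu> 3$1 - \<nu> 1$1)"
    "wedge_map \<nu> p $ 2 = \<nu> 1$2 + p$1 * (\<nu> 2$2 - \<nu> 1$2) + p$2 * (\<nu> 3$2 - \<nu> 1$2)"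
    "wedge_map \<nu> p $ 3 = wedge_bottom \<nu> (p$1) (p$2) + p$3 * wedge_height \<nu> (p$1) (p$2)"
  unfolding wedge_map_expand wedge_bottom_def wedge_height_def
  using vertically_mapped_coords[OF assms] by (simp_all add: algebra_simps)

lemma jacobian_wedge_map_entries:
  fixes p :: "real^3"
  assumes "vertically_mapped \<nu>"
  defines "A \<equiv> jacobian (wedge_map \<nu>) (at p)"
  shows "A$1$1 = \<nu> 2$1 - \<nu> 1$1" "A$1$2 = \<nu> 3$1 - \<nu> 1$1" "A$1$3 = 0"
    "A$2$1 = \<nu> 2$2 - \<nu> 1$2" "A$2$2 = \<nu> 3$2 - \<nu> 1$2" "A$2$3 = 0"
    "A$3$3 = wedge_height \<nu> (p$1) (p$2)"
proof -
  have "A = matrix (wedge_map_deriv \<nu> p)"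
    unfolding A_def jacobian_def frechet_derivative_at[OF wedge_map_has_derivative] ..
  then show "A$1$1 = \<nu> 2$1 - \<nu> 1$1" "A$1$2 = \<nu> 3$1 - \<nu> 1$1" "A$1$3 = 0"
    "A$2$1 = \<nu> 2$2 - \<nu> 1$2" "A$2$2 = \<nu> 3$2 - \<nu> 1$2" "A$2$3 = 0"
    "A$3$3 = wedge_height \<nu> (p$1) (p$2)"
    unfolding matrix_def wedge_map_deriv_def wedge_height_def
    using vertically_mapped_coords[OF assms(1)] by (simp_all add: axis_def algebra_simps)
qed

lemma wedge_J_vertically_mapped:
  assumes "vertically_mapped \<nu>"
  shows "wedge_J \<nu> p = base_det \<nu> * wedge_height \<nu> (p$1) (p$2)"
  unfolding wedge_J_def Determinants.det_3 jacobian_wedge_map_entries[OF assms]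
  by (simp add: base_det_def algebra_simps)

text \<open>The third column of the Jacobian matrix vanishes off the diagonal, so the \<open>(3,3)\<close> entry
  of its inverse is the reciprocal of its \<open>(3,3)\<close> entry.\<close>

lemma geo_tz_vertically_mapped:
  assumes vm: "vertically_mapped \<nu>" and J: "wedge_J \<nu> p \<noteq> 0"
  shows "geo_tz \<nu> p = 1 / wedge_height \<nu> (p$1) (p$2)"
proof -
  define A where "A = jacobian (wedge_map \<nu>) (at p)"
  have "invertible A" using J unfolding A_def wedge_J_def by (simp add: invertible_det_nz)
  then have "\<exists>A'. A ** A' = Finite_Cartesian_Product.mat 1 \<and> A' ** A = Finite_Cartesian_Product.mat 1"
    unfolding invertible_def by blast
  then have inv: "matrix_inv A ** A = Finite_Cartesian_Product.mat 1"
    unfolding matrix_inv_def by (metis (mono_tags, lifting) someI_ex)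
  have "1 = (matrix_inv A ** A) $ 3 $ 3" unfolding inv by (simp add: Finite_Cartesian_Product.mat_def)
  also have "\<dots> = matrix_inv A $ 3 $ 3 * wedge_height \<nu> (p$1) (p$2)"
    unfolding matrix_matrix_mult_def sum_3 using jacobian_wedge_map_entries[OF vm, of p]
    by (simp add: A_def)
  finally show ?thesis unfolding geo_tz_def A_def[symmetric]
    by (metis divide_eq_eq mult_zero_right zero_neq_one)
qed

lemma continuous_on_wedge_height:
  "continuous_on UNIV (\<lambda>z::real\<times>real. wedge_height \<nu> (fst z) (snd z))"
  unfolding wedge_height_def by (intro continuous_intros)

lemma geo_tz_mult_wedge_J:
  assumes "vertically_mapped \<nu>" and "wedge_J \<nu> p \<noteq> 0"
  shows "geo_tz \<nu> p * wedge_J \<nu> p = base_det \<nu>"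
  using assms by (auto simp: geo_tz_vertically_mapped wedge_J_vertically_mapped)

locale vertical_wedge =
  fixes \<nu> :: "nat \<Rightarrow> real^3"
  assumes vertically_mapped: "vertically_mapped \<nu>"
    and wedge_J_pos: "\<And>p. p \<in> ref_wedge \<Longrightarrow> wedge_J \<nu> p > 0"
begin

lemmas J_eq = wedge_J_vertically_mapped[OF vertically_mapped]
lemmas coords = wedge_map_coords[OF vertically_mapped]

lemma base_det_mult_height_pos:
  assumes "r \<ge> 0" "s \<ge> 0" "r + s \<le> 1"
  shows "base_det \<nu> * wedge_height \<nu> r s > 0"
proof -
  have "(vector [r, s, 0] :: real^3) \<in> ref_wedge" using assms by (simp add: ref_wedge_def)
  from wedge_J_pos[OF this] show ?thesis by (simp add: J_eq)
qed

lemma base_det_nonzero: "base_det \<nu> \<noteq> 0"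
  using base_det_mult_height_pos[of 0 0] by auto

lemma wedge_height_nonzero:
  assumes "p \<in> ref_wedge"
  shows "wedge_height \<nu> (p$1) (p$2) \<noteq> 0"
  using base_det_mult_height_pos[of "p$1" "p$2"] assms by (auto simp: ref_wedge_def)

lemma inj_on_wedge_map: "inj_on (wedge_map \<nu>) ref_wedge"
proof
  fix p q assume p: "p \<in> ref_wedge" and q: "q \<in> ref_wedge"
    and e: "wedge_map \<nu> p = wedge_map \<nu> q"
  define a b c d where "a = \<nu> 2$1 - \<nu> 1$1" "b = \<nu> 3$1 - \<nu> 1$1"
    "c = \<nu> 2$2 - \<nu> 1$2" "d = \<nu> 3$2 - \<nu> 1$2"
  define x y where "x = p$1 - q$1" "y = p$2 - q$2"
  have D: "a * d - b * c \<noteq> 0" using base_det_nonzero by (simp add: base_det_def a_b_c_d_def)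
  have l1: "x * a + y * b = 0" and l2: "x * c + y * d = 0"
    using arg_cong[OF e, of "\<lambda>x. x$1"] arg_cong[OF e, of "\<lambda>x. x$2"]
    unfolding coords a_b_c_d_def x_y_def by (simp_all add: algebra_simps)
  have "x * (a * d - b * c) = d * (x * a + y * b) - b * (x * c + y * d)"
    "y * (a * d - b * c) = a * (x * c + y * d) - c * (x * a + y * b)"
    by (simp_all add: algebra_simps)
  then have "x * (a * d - b * c) = 0" "y * (a * d - b * c) = 0" using l1 l2 by simp_all
  then have r: "p$1 = q$1" and s: "p$2 = q$2" using D by (simp_all add: x_y_def)
  have "p$3 * wedge_height \<nu> (p$1) (p$2) = q$3 * wedge_height \<nu> (p$1) (p$2)"
    using arg_cong[OF e, of "\<lambda>x. x$3"] unfolding coords r s by simp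
  then have t: "p$3 = q$3" using wedge_height_nonzero[OF p] by simp
  show "p = q" unfolding Finite_Cartesian_Product.vec_eq_iff forall_3 using r s t by simp
qed

text \<open>Along a vertical line \<open>x, y\<close> are fixed and \<open>z\<close> is affine in \<open>t\<close> with slope
  \<open>wedge_height\<close>, so \<open>\<partial>\<^sub>z\<close> of the physical basis function is its \<open>t\<close>-derivative divided by it.\<close>

lemma pdz_phys_basis:
  assumes p: "p \<in> ref_wedge" and t: "0 < p$3" "p$3 < 1"
  shows "pdz (phys_basis \<nu> ltri l1 (i,j)) (wedge_map \<nu> p)
         = ltri i (p$1) (p$2) * poly (pderiv (l1 j)) (p$3) / wedge_height \<nu> (p$1) (p$2)"
proof -
  define q where "q = wedge_map \<nu> p"
  define H where "H = wedge_height \<nu> (p$1) (p$2)"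
  have H: "H \<noteq> 0" using wedge_height_nonzero[OF p] by (simp add: H_def)
  define P where "P z = (\<chi> k. if k = 3 then p$3 + (z - q$3) / H else p$k)" for z
  define U where "U = {z. 0 < p$3 + (z - q$3) / H \<and> p$3 + (z - q$3) / H < 1}"
  have P: "P z $ 1 = p$1" "P z $ 2 = p$2" "P z $ 3 = p$3 + (z - q$3) / H" for z
    by (simp_all add: P_def)
  have q3: "q$3 = wedge_bottom \<nu> (p$1) (p$2) + p$3 * H"
    by (simp add: q_def coords H_def)
  have U: "open U" unfolding U_def
    using H by (intro open_Collect_conj open_Collect_less continuous_intros) auto
  have qU: "q$3 \<in> U" using t by (simp add: U_def)
  have eq: "phys_basis \<nu> ltri l1 (i,j) (\<chi> k. if k = 3 then z else q $ k)
       = ltri i (p$1) (p$2) * poly (l1 j) (p$3 + (z - q$3) / H)" if z: "z \<in> U" for z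
  proof -
    have PW: "P z \<in> ref_wedge" using p z by (simp add: ref_wedge_def P U_def)
    have "wedge_map \<nu> (P z) = (\<chi> k. if k = 3 then z else q $ k)"
      unfolding Finite_Cartesian_Product.vec_eq_iff forall_3 using H
      by (simp add: coords P q_def q3 field_simps) (simp add: q3 H_def)
    then have "inv_into ref_wedge (wedge_map \<nu>) (\<chi> k. if k = 3 then z else q $ k) = P z"
      using inv_into_f_f[OF inj_on_wedge_map PW] by simp
    then show ?thesis by (simp add: phys_basis_def lwedge_def P)
  qed
  have "((\<lambda>z. ltri i (p$1) (p$2) * poly (l1 j) (p$3 + (z - q$3) / H)) has_field_derivative
       ltri i (p$1) (p$2) * (poly (pderiv (l1 j)) (p$3 + (q$3 - q$3) / H) * (1 / H))) (at (q$3))"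
    using H by (intro DERIV_cmult DERIV_chain2[OF poly_DERIV] derivative_eq_intros) auto
  then have "((\<lambda>z. phys_basis \<nu> ltri l1 (i,j) (\<chi> k. if k = 3 then z else q $ k)) has_field_derivative
       ltri i (p$1) (p$2) * (poly (pderiv (l1 j)) (p$3 + (q$3 - q$3) / H) * (1 / H))) (at (q$3))"
    by (rule has_field_derivative_transform_within_open[OF _ U qU]) (simp add: eq)
  then have "pdz (phys_basis \<nu> ltri l1 (i,j)) q
      = ltri i (p$1) (p$2) * (poly (pderiv (l1 j)) (p$3 + (q$3 - q$3) / H) * (1 / H))"
    unfolding pdz_def by (rule DERIV_imp_deriv)
  then show ?thesis by (simp add: q_def H_def)
qed

end

section \<open>Fubini on the reference wedge\<close>

definition vec3_of_pair :: "(real^2) \<times> real \<Rightarrow> real^3" where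
  "vec3_of_pair z = (\<chi> k. if k = 1 then fst z $ 1 else if k = 2 then fst z $ 2 else snd z)"

lemma vec3_of_pair_nth [simp]:
  "vec3_of_pair z $ 1 = fst z $ 1" "vec3_of_pair z $ 2 = fst z $ 2" "vec3_of_pair z $ 3 = snd z"
  by (simp_all add: vec3_of_pair_def)

lemma Basis_vec_range_axis: "(Basis :: (real^'n) set) = range (\<lambda>i. axis i 1)"
  by (auto simp: Basis_vec_def)

lemma prod_Basis_vec_axis: "(\<Prod>b\<in>(Basis::(real^'n) set). f b) = (\<Prod>i\<in>UNIV. f (axis i 1))"
proof -
  have "inj (\<lambda>i::'n. axis i (1::real))" by (auto intro!: injI simp: axis_eq_axis)
  then show ?thesis unfolding Basis_vec_range_axis by (simp add: prod.reindex)
qed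

lemma continuous_on_vec3_of_pair: "continuous_on UNIV vec3_of_pair"
  unfolding vec3_of_pair_def
proof (intro continuous_on_vec_lambda)
  fix i :: 3
  show "continuous_on UNIV (\<lambda>z::(real^2) \<times> real. if i = 1 then fst z $ 1 else if i = 2 then fst z $ 2 else snd z)"
    by (cases "i = 1"; cases "i = 2") (auto intro!: continuous_intros)
qed

lemma vec3_of_pair_measurable[measurable]: "vec3_of_pair \<in> borel_measurable borel"
  by (rule borel_measurable_continuous_onI[OF continuous_on_vec3_of_pair])

lemma lborel_eq_distr_vec3_of_pair:
  "lborel = distr (lborel :: ((real^2) \<times> real) measure) borel vec3_of_pair"
proof (rule lborel_eqI)
  fix l u :: "real^3"
  assume "\<And>b. b \<in> Basis \<Longrightarrow> l \<bullet> b \<le> u \<bullet> b"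
  then have le: "l $ i \<le> u $ i" for i
    by (metis Basis_vec_range_axis rangeI cart_eq_inner_axis)
  define L U :: "real^2" where "L = (\<chi> k. if k = 1 then l$1 else l$2)" "U = (\<chi> k. if k = 1 then u$1 else u$2)"
  have "vec3_of_pair -` box l u = box L U \<times> {l$3 <..< u$3}"
    by (auto simp: mem_box_cart forall_2 forall_3 L_U_def vec3_of_pair_def)
  then have "emeasure (distr lborel borel vec3_of_pair) (box l u)
      = emeasure (lborel \<Otimes>\<^sub>M lborel) (box L U \<times> {l$3 <..< u$3})"
    by (simp add: emeasure_distr lborel_prod)
  also have "\<dots> = emeasure lborel (box L U) * emeasure lborel {l$3 <..< u$3}"
    by (simp add: lborel.emeasure_pair_measure_Times)
  also have "emeasure lborel (box L U) = ennreal (\<Prod>b\<in>Basis. (U - L) \<bullet> b)"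
    using le unfolding emeasure_lborel_box_eq by (auto simp: Basis_vec_range_axis inner_axis L_U_def)
  also have "(\<Prod>b\<in>Basis. (U - L) \<bullet> b) = (u$1 - l$1) * (u$2 - l$2)"
    unfolding prod_Basis_vec_axis UNIV_2 by (simp add: inner_axis L_U_def)
  also have "ennreal ((u$1 - l$1) * (u$2 - l$2)) * emeasure lborel {l$3 <..< u$3}
      = ennreal ((u$1 - l$1) * (u$2 - l$2) * (u$3 - l$3))"
    using le by (simp add: ennreal_mult)
  also have "(u$1 - l$1) * (u$2 - l$2) * (u$3 - l$3) = (\<Prod>b\<in>Basis. (u - l) \<bullet> b)"
    unfolding prod_Basis_vec_axis UNIV_3 by (simp add: inner_axis)
  finally show "emeasure (distr lborel borel vec3_of_pair) (box l u) = (\<Prod>b\<in>Basis. (u - l) \<bullet> b)" .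
qed simp

lemma integral_lborel_vec3_of_pair:
  fixes F :: "real^3 \<Rightarrow> real"
  assumes "F \<in> borel_measurable borel"
  shows "(\<integral>x. F x \<partial>lborel) = (\<integral>z. F (vec3_of_pair z) \<partial>lborel)"
proof -
  have "(\<integral>x. F x \<partial>lborel) = (\<integral>x. F x \<partial>(distr lborel borel vec3_of_pair))"
    by (simp flip: lborel_eq_distr_vec3_of_pair)
  also have "\<dots> = (\<integral>z. F (vec3_of_pair z) \<partial>lborel)"
    by (rule integral_distr) (auto intro: assms)
  finally show ?thesis .
qed

lemma integral_lborel_indicator_Times:
  fixes f :: "'a::euclidean_space \<Rightarrow> real" and g :: "'b::euclidean_space \<Rightarrow> real"
  assumes "compact S" "compact T" "continuous_on S f" "continuous_on T g"
  shows "(\<integral>z. indicator S (fst z) * f (fst z) * (indicator T (snd z) * g (snd z)) \<partial>lborel)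
    = (\<integral>x. indicator S x * f x \<partial>lborel) * (\<integral>y. indicator T y * g y \<partial>lborel)"
proof -
  have "integrable lborel (\<lambda>z::'a \<times> 'b. indicator (S \<times> T) z *\<^sub>R (f (fst z) * g (snd z)))"
    using assms by (intro borel_integrable_compact compact_Times continuous_intros
        continuous_on_compose2[OF assms(3), of "S \<times> T" fst]
        continuous_on_compose2[OF assms(4), of "S \<times> T" snd]) auto
  also have "(\<lambda>z::'a \<times> 'b. indicator (S \<times> T) z *\<^sub>R (f (fst z) * g (snd z)))
      = (\<lambda>(x,y). indicator S x * f x * (indicator T y * g y))"
    by (auto simp: indicator_def fun_eq_iff)
  finally have "integrable (lborel \<Otimes>\<^sub>M lborel) (\<lambda>(x,y). indicator S x * f x * (indicator T y * g y))"
    by (simp add: lborel_prod)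
  from lborel_pair.integral_fst[OF this] show ?thesis
    by (simp add: case_prod_beta' lborel_prod[symmetric])
qed

lemma compact_ref_tri: "compact ref_tri"
  unfolding compact_eq_bounded_closed
proof (intro conjI)
  show "bounded ref_tri"
    by (rule bounded_subset[OF bounded_cbox[of 0 1]]) (auto simp: ref_tri_def mem_box_cart forall_2)
  show "closed ref_tri" unfolding ref_tri_def
    by (intro closed_Collect_conj closed_Collect_le continuous_intros)
qed

lemma compact_ref_wedge: "compact ref_wedge"
  unfolding compact_eq_bounded_closed
proof (intro conjI)
  show "bounded ref_wedge"
    by (rule bounded_subset[OF bounded_cbox[of 0 1]]) (auto simp: ref_wedge_def mem_box_cart forall_3)
  show "closed ref_wedge" unfolding ref_wedge_def
    by (intro closed_Collect_conj closed_Collect_le continuous_intros)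
qed

lemma has_integral_compact_lborel:
  fixes h :: "'a::euclidean_space \<Rightarrow> real"
  assumes "compact S" "continuous_on S h"
  shows "(h has_integral (\<integral>x. indicator S x * h x \<partial>lborel)) S"
proof -
  have "integrable lborel (\<lambda>x. indicator S x *\<^sub>R h x)" by (rule borel_integrable_compact[OF assms])
  from has_integral_integral_lborel[OF this]
  have "((\<lambda>x. indicator S x * h x) has_integral (\<integral>x. indicator S x * h x \<partial>lborel)) UNIV"
    by simp
  moreover have "(\<lambda>x. indicator S x * h x) = (\<lambda>x. if x \<in> S then h x else 0)"
    by (auto simp: indicator_def)
  ultimately show ?thesis by (simp add: has_integral_restrict_UNIV)
qed

lemma has_integral_ref_wedge_product:
  fixes f :: "real \<Rightarrow> real \<Rightarrow> real" and g :: "real \<Rightarrow> real"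
  assumes cf: "continuous_on UNIV (\<lambda>z::real\<times>real. f (fst z) (snd z))" and cg: "continuous_on UNIV g"
  shows "((\<lambda>p::real^3. f (p$1) (p$2) * g (p$3)) has_integral
          (integral ref_tri (\<lambda>q. f (q$1) (q$2)) * integral {0..1} g)) ref_wedge"
proof -
  define h where "h p = f (p$1) (p$2) * g (p$3)" for p :: "real^3"
  have cfq: "continuous_on ref_tri (\<lambda>q::real^2. f (q$1) (q$2))"
    by (rule continuous_on_compose2[OF cf, of _ "\<lambda>q. (q$1, q$2)", simplified])
      (auto intro!: continuous_intros)
  have cg01: "continuous_on {0..1} g" using cg by (rule continuous_on_subset) simp
  have ch: "continuous_on ref_wedge h" unfolding h_def
    by (intro continuous_intros continuous_on_compose2[OF cg, of _ "\<lambda>p. p$3", simplified]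
        continuous_on_compose2[OF cf, of _ "\<lambda>p. (p$1, p$2)", simplified])
  have "(\<integral>x. indicator ref_wedge x * h x \<partial>lborel)
      = (\<integral>z. indicator ref_wedge (vec3_of_pair z) * h (vec3_of_pair z) \<partial>lborel)"
    using borel_integrable_compact[OF compact_ref_wedge ch]
    by (intro integral_lborel_vec3_of_pair) (simp add: borel_measurable_integrable)
  also have "\<dots> = (\<integral>z. indicator ref_tri (fst z) * f (fst z $ 1) (fst z $ 2)
      * (indicator {0..1} (snd z) * g (snd z)) \<partial>lborel)"
    by (intro Bochner_Integration.integral_cong)
      (auto simp: h_def indicator_def ref_wedge_def ref_tri_def)
  also have "\<dots> = integral ref_tri (\<lambda>q. f (q$1) (q$2)) * integral {0..1} g"
    unfolding integral_lborel_indicator_Times[OF compact_ref_tri compact_Icc cfq cg01]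
    using has_integral_compact_lborel[OF compact_ref_tri cfq] has_integral_compact_lborel[OF compact_Icc cg01]
    by (simp add: integral_unique)
  finally show ?thesis
    using has_integral_compact_lborel[OF compact_ref_wedge ch] by (simp add: h_def[abs_def])
qed

lemma finite_deg_le_pairs: "finite {(a,b). a + b \<le> (N::nat)}"
  by (rule finite_subset[of _ "{..N} \<times> {..N}"]) auto

lemma continuous_on_poly2:
  assumes "poly2_deg_le N f"
  shows "continuous_on UNIV (\<lambda>z::real\<times>real. f (fst z) (snd z))"
proof -
  obtain c where c: "\<And>r s. f r s = (\<Sum>(a,b)\<in>{(a,b). a + b \<le> N}. c a b * r ^ a * s ^ b)"
    using assms unfolding poly2_deg_le_def by blast
  have "continuous_on UNIV (\<lambda>z::real\<times>real. \<Sum>x\<in>{(a,b). a + b \<le> N}.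
      c (fst x) (snd x) * fst z ^ fst x * snd z ^ snd x)"
    by (intro continuous_intros)
  then show ?thesis by (simp add: c split_def)
qed

lemma continuous_on_vec2_compose:
  assumes "continuous_on UNIV (\<lambda>z::real\<times>real. f (fst z) (snd z))"
  shows "continuous_on S (\<lambda>q::real^2. f (q$1) (q$2))"
  by (rule continuous_on_compose2[OF assms, of _ "\<lambda>q. (q$1, q$2)", simplified])
    (auto intro!: continuous_intros)

lemma coeffs_eq_0_if_vanishes_on_interval:
  fixes d :: "nat \<Rightarrow> real"
  assumes ab: "a < b" and z: "\<And>x. a < x \<Longrightarrow> x < b \<Longrightarrow> (\<Sum>k\<le>N. d k * x ^ k) = 0"
  shows "\<forall>k\<le>N. d k = 0"
proof -
  define p where "p = (\<Sum>k\<le>N. monom (d k) k)"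
  have pe: "poly p x = (\<Sum>k\<le>N. d k * x ^ k)" for x by (simp add: p_def poly_sum poly_monom)
  have "p = 0"
  proof (rule ccontr)
    assume "p \<noteq> 0"
    then have "finite {x. poly p x = 0}" by (rule poly_roots_finite)
    moreover have "{a<..<b} \<subseteq> {x. poly p x = 0}" using z by (auto simp: pe)
    ultimately have "finite {a<..<b}" by (rule finite_subset[rotated])
    with ab show False using infinite_Ioo by blast
  qed
  then have "coeff p k = 0" for k by simp
  then have "(if k \<le> N then d k else 0) = 0" for k by (simp add: p_def coeff_sum)
  then show ?thesis by (metis (full_types))
qed

lemma poly2_deg_le_vanishes_if_vanishes_on_square:
  assumes P: "poly2_deg_le N P"
    and z: "\<And>r s. 0 < r \<Longrightarrow> r < 1/2 \<Longrightarrow> 0 < s \<Longrightarrow> s < 1/2 \<Longrightarrow> P r s = (0::real)"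
  shows "P r s = 0"
proof -
  obtain c where c: "\<And>r s. P r s = (\<Sum>(a,b)\<in>{(a,b). a + b \<le> N}. c a b * r ^ a * s ^ b)"
    using P unfolding poly2_deg_le_def by blast
  define c' where "c' a b = (if a + b \<le> N then c a b else 0)" for a b
  have P2: "P r s = (\<Sum>a\<le>N. (\<Sum>b\<le>N. c' a b * s ^ b) * r ^ a)" for r s
  proof -
    have "P r s = (\<Sum>(a,b)\<in>{..N} \<times> {..N}. c' a b * r ^ a * s ^ b)"
      unfolding c c'_def
      by (rule sum.mono_neutral_cong_left) (auto simp: finite_deg_le_pairs split: if_splits)
    also have "\<dots> = (\<Sum>a\<le>N. \<Sum>b\<le>N. c' a b * r ^ a * s ^ b)"
      by (rule sum.cartesian_product[symmetric])
    also have "\<dots> = (\<Sum>a\<le>N. (\<Sum>b\<le>N. c' a b * s ^ b) * r ^ a)"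
      by (simp add: sum_distrib_right sum_distrib_left mult_ac)
    finally show ?thesis .
  qed
  have "\<forall>a\<le>N. (\<Sum>b\<le>N. c' a b * s ^ b) = 0" if "0 < s" "s < 1/2" for s
    by (rule coeffs_eq_0_if_vanishes_on_interval[of 0 "1/2"]) (use that z P2 in auto)
  then have "\<forall>b\<le>N. c' a b = 0" if "a \<le> N" for a
    using that by (intro coeffs_eq_0_if_vanishes_on_interval[of 0 "1/2"]) auto
  then show ?thesis unfolding P2 by simp
qed

lemma poly2_deg_le_sum:
  assumes fin: "finite I" and L: "\<forall>i\<in>I. poly2_deg_le N (L i)"
  shows "poly2_deg_le N (\<lambda>r s. \<Sum>i\<in>I. v i * L i r s)"
proof -
  from L obtain C where
    C: "\<forall>i\<in>I. \<forall>r s. L i r s = (\<Sum>(a,b)\<in>{(a,b). a + b \<le> N}. C i a b * r ^ a * s ^ b)"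
    unfolding poly2_deg_le_def by (metis (no_types))
  have "(\<Sum>i\<in>I. v i * L i r s)
      = (\<Sum>(a,b)\<in>{(a,b). a + b \<le> N}. (\<Sum>i\<in>I. v i * C i a b) * r ^ a * s ^ b)" for r s
  proof -
    have "(\<Sum>i\<in>I. v i * L i r s)
        = (\<Sum>i\<in>I. \<Sum>(a,b)\<in>{(a,b). a + b \<le> N}. v i * (C i a b * r ^ a * s ^ b))"
      using C by (simp add: sum_distrib_left split_def)
    also have "\<dots> = (\<Sum>(a,b)\<in>{(a,b). a + b \<le> N}. \<Sum>i\<in>I. v i * (C i a b * r ^ a * s ^ b))"
      by (subst sum.swap) (simp add: split_def)
    also have "\<dots> = (\<Sum>(a,b)\<in>{(a,b). a + b \<le> N}. (\<Sum>i\<in>I. v i * C i a b) * r ^ a * s ^ b)"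
      by (simp add: sum_distrib_right sum_distrib_left mult_ac split_def)
    finally show ?thesis .
  qed
  then show ?thesis
    unfolding poly2_deg_le_def by (intro exI[of _ "\<lambda>a b. \<Sum>i\<in>I. v i * C i a b"]) blast
qed

lemma continuous_on_lagrange_tri:
  assumes "lagrange_tri N pr ps ltri" "i \<in> {1..ntri N}"
  shows "continuous_on UNIV (\<lambda>z::real\<times>real. ltri i (fst z) (snd z))"
  using assms by (intro continuous_on_poly2[of N]) (auto simp: lagrange_tri_def)

section \<open>Interpolation at the Gauss--Lobatto nodes\<close>

lemma gll_points_less:
  assumes "gll_points N tt" "i < k" "k \<le> N"
  shows "tt i < tt k"
proof (rule lift_Suc_mono_less_ivl[where N = "{..<N}"])
  show "\<And>n. n \<in> {..<N} \<Longrightarrow> tt n < tt (Suc n)" using assms(1) by (simp add: gll_points_def)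
qed (use assms(2,3) in auto)

lemma gll_points_in_unit_interval:
  assumes "gll_points N tt" "k \<le> N"
  shows "tt k \<in> {0..1}"
proof -
  have "tt 0 = 0" "tt N = 1" using assms(1) by (auto simp: gll_points_def)
  then show ?thesis
    using gll_points_less[OF assms(1), of 0 k] gll_points_less[OF assms(1), of k N] assms(2)
    by (cases "k = 0"; cases "k = N") auto
qed

lemma inj_on_gll_points:
  assumes "gll_points N tt"
  shows "inj_on tt {0..N}"
proof (rule inj_onI)
  fix i k assume "i \<in> {0..N}" "k \<in> {0..N}" "tt i = tt k"
  then show "i = k" using gll_points_less[OF assms, of i k] gll_points_less[OF assms, of k i]
    by (cases i k rule: linorder_cases) auto
qed

lemma lagrange_1d_interpolation:
  fixes p :: "real poly"
  assumes inj: "inj_on tt {0..N}" and lag: "lagrange_1d N tt l1" and dp: "degree p \<le> N"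
  shows "poly p t = (\<Sum>m\<in>{0..N}. poly p (tt m) * poly (l1 m) t)"
proof -
  define q where "q = p - (\<Sum>m\<in>{0..N}. Polynomial.smult (poly p (tt m)) (l1 m))"
  have dq: "degree q \<le> N"
    unfolding q_def using dp lag
    by (intro degree_diff_le degree_sum_le)
      (auto simp: lagrange_1d_def intro: order.trans[OF degree_smult_le])
  have roots: "poly q (tt k) = 0" if k: "k \<in> {0..N}" for k
  proof -
    have "(\<Sum>m\<in>{0..N}. poly p (tt m) * poly (l1 m) (tt k))
        = (\<Sum>m\<in>{0..N}. if m = k then poly p (tt m) else 0)"
      using lag k by (intro sum.cong) (auto simp: lagrange_1d_def)
    also have "\<dots> = poly p (tt k)" using k by simp
    finally show ?thesis by (simp add: q_def poly_sum)
  qed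
  have "q = 0"
  proof (rule ccontr)
    assume q0: "q \<noteq> 0"
    have "tt ` {0..N} \<subseteq> {x. poly q x = 0}" using roots by auto
    then have "card (tt ` {0..N}) \<le> card {x. poly q x = 0}"
      by (intro card_mono poly_roots_finite[OF q0])
    also have "\<dots> \<le> degree q" by (rule card_poly_roots_bound[OF q0])
    finally show False using dq card_image[OF inj] by simp
  qed
  then have "p = (\<Sum>m\<in>{0..N}. Polynomial.smult (poly p (tt m)) (l1 m))" by (simp add: q_def)
  then have "poly p t = poly (\<Sum>m\<in>{0..N}. Polynomial.smult (poly p (tt m)) (l1 m)) t"
    by (rule arg_cong)
  then show ?thesis by (simp add: poly_sum)
qed

section \<open>Invertibility of the mass matrices\<close>

definition mass_1d :: "(nat \<Rightarrow> real poly) \<Rightarrow> nat \<Rightarrow> nat \<Rightarrow> real" where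
  "mass_1d l1 = (\<lambda>j j'. integral {0..1} (\<lambda>t. poly (l1 j) t * poly (l1 j') t))"

definition stiff_1d :: "(nat \<Rightarrow> real poly) \<Rightarrow> nat \<Rightarrow> nat \<Rightarrow> real" where
  "stiff_1d l1 = (\<lambda>j j'. integral {0..1} (\<lambda>t. poly (l1 j) t * poly (pderiv (l1 j')) t))"

lemma gram_quadratic_form:
  fixes h :: "'i \<Rightarrow> 'a::euclidean_space \<Rightarrow> real"
  assumes fin: "finite I"
    and int: "\<And>a b. a \<in> I \<Longrightarrow> b \<in> I \<Longrightarrow> (\<lambda>x. h a x * h b x * w x) integrable_on S"
  shows "(\<Sum>a\<in>I. v a * (\<Sum>b\<in>I. integral S (\<lambda>x. h a x * h b x * w x) * v b))
         = integral S (\<lambda>x. (\<Sum>a\<in>I. v a * h a x)\<^sup>2 * w x)"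
proof -
  have e: "(\<lambda>x. (\<Sum>a\<in>I. v a * h a x)\<^sup>2 * w x)
      = (\<lambda>x. \<Sum>a\<in>I. \<Sum>b\<in>I. v a * v b * (h a x * h b x * w x))"
  proof
    fix x
    have "(\<Sum>a\<in>I. v a * h a x)\<^sup>2 * w x = (\<Sum>a\<in>I. \<Sum>b\<in>I. (v a * h a x) * (v b * h b x)) * w x"
      by (simp add: power2_eq_square sum_product)
    also have "\<dots> = (\<Sum>a\<in>I. \<Sum>b\<in>I. (v a * h a x) * (v b * h b x) * w x)"
      by (simp add: sum_distrib_right)
    also have "\<dots> = (\<Sum>a\<in>I. \<Sum>b\<in>I. v a * v b * (h a x * h b x * w x))"
      by (simp add: mult_ac)
    finally show "(\<Sum>a\<in>I. v a * h a x)\<^sup>2 * w x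
        = (\<Sum>a\<in>I. \<Sum>b\<in>I. v a * v b * (h a x * h b x * w x))" .
  qed
  have ii: "(\<lambda>x. v a * v b * (h a x * h b x * w x)) integrable_on S" if "a \<in> I" "b \<in> I" for a b
    using integrable_on_cmult_left[OF int[OF that], of "v a * v b"] by simp
  have "integral S (\<lambda>x. \<Sum>a\<in>I. \<Sum>b\<in>I. v a * v b * (h a x * h b x * w x))
      = (\<Sum>a\<in>I. integral S (\<lambda>x. \<Sum>b\<in>I. v a * v b * (h a x * h b x * w x)))"
    using fin ii by (intro integral_sum) (auto intro!: integrable_sum)
  also have "\<dots> = (\<Sum>a\<in>I. \<Sum>b\<in>I. integral S (\<lambda>x. v a * v b * (h a x * h b x * w x)))"
    using fin ii by (intro sum.cong refl integral_sum) auto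
  also have "\<dots> = (\<Sum>a\<in>I. \<Sum>b\<in>I. v a * v b * integral S (\<lambda>x. h a x * h b x * w x))"
    by simp
  also have "\<dots> = (\<Sum>a\<in>I. v a * (\<Sum>b\<in>I. integral S (\<lambda>x. h a x * h b x * w x) * v b))"
    by (simp add: sum_distrib_left mult_ac)
  finally show ?thesis unfolding e by simp
qed

lemma vanishes_on_cbox_if_integral_ref_tri_eq_0:
  fixes F :: "real^2 \<Rightarrow> real"
  assumes cF: "continuous_on ref_tri F" and nonneg: "\<And>q. q \<in> ref_tri \<Longrightarrow> F q \<ge> 0"
    and int0: "integral ref_tri F = 0" and q: "q \<in> cbox 0 (\<chi> k. 1/2)"
  shows "F q = 0"
proof -
  define B :: "(real^2) set" where "B = cbox 0 (\<chi> k. 1/2)"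
  have BT: "B \<subseteq> ref_tri" by (auto simp: B_def ref_tri_def mem_box_cart forall_2)
  have intF: "F integrable_on ref_tri"
    using has_integral_compact_lborel[OF compact_ref_tri cF] by blast
  have cB: "continuous_on B F" using cF BT by (rule continuous_on_subset)
  then have intB: "F integrable_on B" unfolding B_def by (rule integrable_continuous)
  have "integral B F \<le> integral ref_tri F"
    by (rule integral_subset_le[OF BT intB intF]) (use nonneg in auto)
  moreover have "integral B F \<ge> 0" using nonneg BT by (intro integral_nonneg intB) auto
  ultimately have "integral B F = 0" using int0 by simp
  moreover have "(\<chi> k. 1/4) \<in> box (0::real^2) (\<chi> k. 1/2)" by (auto simp: mem_box_cart)
  ultimately show ?thesis
    using integral_cbox_eq_0_iff[of 0 "\<chi> k. 1/2" F] cB nonneg BT q unfolding B_def by blast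
qed

lemma gram_tri_inj:
  fixes w :: "real^2 \<Rightarrow> real"
  assumes lag: "lagrange_tri N pr ps ltri"
    and cw: "continuous_on ref_tri w" and wpos: "\<And>q. q \<in> ref_tri \<Longrightarrow> w q > 0"
    and v: "\<forall>a\<in>{1..ntri N}. (\<Sum>b\<in>{1..ntri N}.
      integral ref_tri (\<lambda>q. ltri a (q$1) (q$2) * ltri b (q$1) (q$2) * w q) * v b) = 0"
  shows "\<forall>b\<in>{1..ntri N}. v b = (0::real)"
proof -
  let ?I = "{1..ntri N}"
  define P where "P r s = (\<Sum>a\<in>?I. v a * ltri a r s)" for r s
  have polyP: "poly2_deg_le N P" unfolding P_def
    using lag by (intro poly2_deg_le_sum) (auto simp: lagrange_tri_def)
  have cl: "continuous_on ref_tri (\<lambda>q::real^2. ltri a (q$1) (q$2))" if "a \<in> ?I" for a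
    by (rule continuous_on_vec2_compose[OF continuous_on_lagrange_tri[OF lag that]])
  define F where "F q = (P (q$1) (q$2))\<^sup>2 * w q" for q :: "real^2"
  have cF: "continuous_on ref_tri F" unfolding F_def
    by (intro continuous_intros cw continuous_on_vec2_compose continuous_on_poly2[OF polyP])
  have "(\<Sum>a\<in>?I. v a * (\<Sum>b\<in>?I.
      integral ref_tri (\<lambda>q. ltri a (q$1) (q$2) * ltri b (q$1) (q$2) * w q) * v b))
      = integral ref_tri F"
    unfolding F_def P_def
  proof (rule gram_quadratic_form)
    fix a b assume "a \<in> ?I" "b \<in> ?I"
    then have "continuous_on ref_tri (\<lambda>q. ltri a (q$1) (q$2) * ltri b (q$1) (q$2) * w q)"
      by (intro continuous_intros cl cw)
    then show "(\<lambda>q. ltri a (q$1) (q$2) * ltri b (q$1) (q$2) * w q) integrable_on ref_tri"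
      using has_integral_compact_lborel[OF compact_ref_tri] by blast
  qed simp
  then have "integral ref_tri F = 0" using v by simp
  then have F0: "F q = 0" if "q \<in> cbox 0 (\<chi> k. 1/2)" for q
    using vanishes_on_cbox_if_integral_ref_tri_eq_0[OF cF _ _ that] wpos
    by (simp add: F_def less_imp_le)
  have "P r s = 0" if "0 < r" "r < 1/2" "0 < s" "s < 1/2" for r s
  proof -
    define q :: "real^2" where "q = (\<chi> k. if k = 1 then r else s)"
    have "q \<in> cbox 0 (\<chi> k. 1/2)" "q \<in> ref_tri"
      using that by (auto simp: q_def mem_box_cart forall_2 ref_tri_def)
    then show ?thesis using F0[of q] wpos[of q] by (simp add: F_def q_def)
  qed
  then have P0: "P r s = 0" for r s by (rule poly2_deg_le_vanishes_if_vanishes_on_square[OF polyP])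
  show ?thesis
  proof
    fix k assume k: "k \<in> ?I"
    have "P (pr k) (ps k) = (\<Sum>a\<in>?I. if a = k then v a else 0)"
      unfolding P_def using lag k by (intro sum.cong) (auto simp: lagrange_tri_def)
    also have "\<dots> = v k" using k by simp
    finally show "v k = 0" using P0 by simp
  qed
qed

lemma gram_1d_inj:
  assumes nodes: "tt ` {0..N} \<subseteq> {0..1}" and lag: "lagrange_1d N tt l1"
    and v: "\<forall>a\<in>{0..N}. (\<Sum>b\<in>{0..N}. mass_1d l1 a b * v b) = 0"
  shows "\<forall>b\<in>{0..N}. v b = (0::real)"
proof -
  define P where "P t = (\<Sum>a\<in>{0..N}. v a * poly (l1 a) t)" for t
  have "(\<Sum>a\<in>{0..N}. v a * (\<Sum>b\<in>{0..N}.
      integral {0..1} (\<lambda>t. poly (l1 a) t * poly (l1 b) t * 1) * v b))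
      = integral {0..1} (\<lambda>t. (\<Sum>a\<in>{0..N}. v a * poly (l1 a) t)\<^sup>2 * 1)"
    by (rule gram_quadratic_form) (auto intro!: integrable_continuous_real continuous_intros)
  then have "integral {0..1} (\<lambda>t. (P t)\<^sup>2) = 0" using v by (simp add: P_def mass_1d_def)
  then have z: "\<forall>t\<in>{0..1}. (P t)\<^sup>2 = 0"
    by (subst integral_eq_0_iff[symmetric]) (auto simp: P_def intro!: continuous_intros)
  show ?thesis
  proof
    fix k assume k: "k \<in> {0..N}"
    have "P (tt k) = (\<Sum>a\<in>{0..N}. if a = k then v a else 0)"
      unfolding P_def using lag k by (intro sum.cong) (auto simp: lagrange_1d_def)
    also have "\<dots> = v k" using k by simp
    moreover have "tt k \<in> {0..1}" using nodes k by blast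
    ultimately show "v k = 0" using z by force
  qed
qed

lemma is_minv_mass_1d:
  assumes "gll_points N tt" "lagrange_1d N tt l1"
  shows "is_minv {0..N} (mass_1d l1) (minv {0..N} (mass_1d l1))"
proof -
  have "tt ` {0..N} \<subseteq> {0..1}" using gll_points_in_unit_interval[OF assms(1)] by auto
  then have "\<exists>B. is_minv {0..N} (mass_1d l1) B"
    by (rule ex_is_minv_if_inj[OF finite_atLeastAtMost gram_1d_inj[OF _ assms(2)]])
  then show ?thesis by (rule is_minv_minv)
qed

section \<open>Kronecker structure of the wedge matrices\<close>

lemma stiff_1d_eq_mprod_D1d:
  assumes inj: "inj_on tt {0..N}" and lag: "lagrange_1d N tt l1" and j': "j' \<in> {0..N}"
  shows "stiff_1d l1 j j' = mprod {0..N} (mass_1d l1) (D1d tt l1) j j'"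
proof -
  have "degree (l1 j') \<le> N" using lag j' by (simp add: lagrange_1d_def)
  then have "degree (pderiv (l1 j')) \<le> N" by (simp add: degree_pderiv)
  then have interp: "poly (pderiv (l1 j')) t = (\<Sum>m\<in>{0..N}. poly (pderiv (l1 j')) (tt m) * poly (l1 m) t)"
    for t by (rule lagrange_1d_interpolation[OF inj lag])
  have "mprod {0..N} (mass_1d l1) (D1d tt l1) j j'
      = (\<Sum>m\<in>{0..N}. integral {0..1} (\<lambda>t. poly (l1 j) t * poly (l1 m) t * poly (pderiv (l1 j')) (tt m)))"
    unfolding mprod_def D1d_def mass_1d_def by simp
  also have "\<dots> = integral {0..1} (\<lambda>t. \<Sum>m\<in>{0..N}. poly (l1 j) t * poly (l1 m) t * poly (pderiv (l1 j')) (tt m))"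
    by (rule integral_sum[symmetric]) (auto intro!: integrable_continuous_real continuous_intros)
  also have "\<dots> = stiff_1d l1 j j'"
    unfolding stiff_1d_def
  proof (rule integral_cong)
    fix t
    show "(\<Sum>m\<in>{0..N}. poly (l1 j) t * poly (l1 m) t * poly (pderiv (l1 j')) (tt m))
        = poly (l1 j) t * poly (pderiv (l1 j')) t"
      unfolding interp[of t] by (simp add: sum_distrib_left mult_ac)
  qed
  finally show ?thesis by simp
qed

lemma minv_mass_1d_stiff_1d:
  assumes g: "gll_points N tt" and lag: "lagrange_1d N tt l1"
    and j: "j \<in> {0..N}" and j': "j' \<in> {0..N}"
  shows "mprod {0..N} (minv {0..N} (mass_1d l1)) (stiff_1d l1) j j' = D1d tt l1 j j'"
proof -
  have "mprod {0..N} (minv {0..N} (mass_1d l1)) (stiff_1d l1) j j'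
      = mprod {0..N} (minv {0..N} (mass_1d l1)) (mprod {0..N} (mass_1d l1) (D1d tt l1)) j j'"
    using stiff_1d_eq_mprod_D1d[OF inj_on_gll_points[OF g] lag j'] by (intro mprod_cong) auto
  also have "\<dots> = D1d tt l1 j j'"
    by (rule is_minv_mprod_cancel_left[OF _ is_minv_mass_1d[OF g lag] j]) simp
  finally show ?thesis .
qed

lemma negligible_coordinate_level_set: "negligible {p::real^'n. p$k = c}"
proof -
  have "negligible {p::real^'n. axis k 1 \<bullet> p = c}" by (rule negligible_hyperplane) simp
  then show ?thesis by (simp add: inner_axis')
qed

context vertical_wedge
begin

lemma mass_wedge_eq_kron:
  assumes lag: "lagrange_tri N pr ps ltri" and ab: "a \<in> wedge_idx N" "b \<in> wedge_idx N"
  shows "mass_wedge \<nu> ltri l1 a b = kron (mass_tri \<nu> ltri) (mass_1d l1) a b"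
proof -
  obtain i j i' j' where ij: "a = (i,j)" "b = (i',j')" "i \<in> {1..ntri N}" "i' \<in> {1..ntri N}"
    using ab by (auto simp: wedge_idx_def)
  define F where "F r s = ltri i r s * ltri i' r s * (base_det \<nu> * wedge_height \<nu> r s)" for r s
  define G where "G t = poly (l1 j) t * poly (l1 j') t" for t
  have "continuous_on UNIV (\<lambda>z::real\<times>real. F (fst z) (snd z))"
    unfolding F_def using continuous_on_lagrange_tri[OF lag] ij
    by (intro continuous_intros continuous_on_wedge_height) auto
  moreover have "continuous_on UNIV G" unfolding G_def by (intro continuous_intros)
  ultimately have "((\<lambda>p::real^3. F (p$1) (p$2) * G (p$3)) has_integral
      mass_tri \<nu> ltri i i' * mass_1d l1 j j') ref_wedge"
    using has_integral_ref_wedge_product[of F G]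
    by (simp add: mass_tri_def mass_1d_def F_def G_def[abs_def] J_eq)
  moreover have "mass_wedge \<nu> ltri l1 (i,j) (i',j')
      = integral ref_wedge (\<lambda>p. F (p$1) (p$2) * G (p$3))"
    unfolding mass_wedge_def F_def G_def lwedge_def by (intro integral_cong) (simp add: J_eq mult_ac)
  ultimately show ?thesis by (simp add: ij kron_def integral_unique)
qed

lemma stiff_z_eq_kron:
  assumes lag: "lagrange_tri N pr ps ltri" and ab: "a \<in> wedge_idx N" "b \<in> wedge_idx N"
  shows "stiff_z \<nu> ltri l1 a b
    = kron (\<lambda>i i'. base_det \<nu> * mass_ref_tri ltri i i') (stiff_1d l1) a b"
proof -
  obtain i j i' j' where ij: "a = (i,j)" "b = (i',j')" "i \<in> {1..ntri N}" "i' \<in> {1..ntri N}"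
    using ab by (auto simp: wedge_idx_def)
  define F where "F r s = base_det \<nu> * (ltri i r s * ltri i' r s)" for r s
  define G where "G t = poly (l1 j) t * poly (pderiv (l1 j')) t" for t
  have "continuous_on UNIV (\<lambda>z::real\<times>real. F (fst z) (snd z))"
    unfolding F_def using continuous_on_lagrange_tri[OF lag] ij by (intro continuous_intros) auto
  moreover have "continuous_on UNIV G" unfolding G_def by (intro continuous_intros)
  ultimately have "((\<lambda>p::real^3. F (p$1) (p$2) * G (p$3)) has_integral
      base_det \<nu> * mass_ref_tri ltri i i' * stiff_1d l1 j j') ref_wedge"
    using has_integral_ref_wedge_product[of F G]
    by (simp add: mass_ref_tri_def stiff_1d_def F_def G_def[abs_def])
  moreover have "stiff_z \<nu> ltri l1 (i,j) (i',j')
      = integral ref_wedge (\<lambda>p. F (p$1) (p$2) * G (p$3))"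
    unfolding stiff_z_def
  proof (rule integral_spike)
    show "negligible ({p::real^3. p$3 = 0} \<union> {p. p$3 = 1})"
      by (intro negligible_Un negligible_coordinate_level_set)
    fix p assume "p \<in> ref_wedge - ({p::real^3. p$3 = 0} \<union> {p. p$3 = 1})"
    then have p: "p \<in> ref_wedge" "0 < p$3" "p$3 < 1" by (auto simp: ref_wedge_def)
    have "wedge_height \<nu> (p$1) (p$2) \<noteq> 0" by (rule wedge_height_nonzero[OF p(1)])
    then show "F (p$1) (p$2) * G (p$3) = pdz (phys_basis \<nu> ltri l1 (i',j')) (wedge_map \<nu> p)
        * lwedge ltri l1 (i,j) p * wedge_J \<nu> p"
      by (simp add: pdz_phys_basis[OF p] J_eq lwedge_def F_def G_def field_simps)
  qed
  ultimately show ?thesis by (simp add: ij kron_def integral_unique)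
qed

lemma is_minv_mass_tri:
  assumes lag: "lagrange_tri N pr ps ltri"
  shows "is_minv {1..ntri N} (mass_tri \<nu> ltri) (minv {1..ntri N} (mass_tri \<nu> ltri))"
proof (rule is_minv_minv, rule ex_is_minv_if_inj)
  define w where "w q = wedge_J \<nu> (vector [q$1, q$2, 0])" for q :: "real^2"
  have "continuous_on ref_tri w"
    unfolding w_def J_eq
    by (simp add: continuous_intros continuous_on_vec2_compose continuous_on_wedge_height)
  moreover have "w q > 0" if "q \<in> ref_tri" for q
    using that wedge_J_pos[of "vector [q$1, q$2, 0]"] by (simp add: w_def ref_tri_def ref_wedge_def)
  moreover fix v assume "\<forall>a\<in>{1..ntri N}. (\<Sum>b\<in>{1..ntri N}. mass_tri \<nu> ltri a b * v b) = 0"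
  ultimately show "\<forall>b\<in>{1..ntri N}. v b = 0"
    using gram_tri_inj[OF lag, of w v] by (simp add: mass_tri_def w_def)
qed simp

end

theorem mainTheorem6:
  fixes N :: nat and \<nu> :: "nat \<Rightarrow> real^3"
    and pr ps :: "nat \<Rightarrow> real" and ltri :: "nat \<Rightarrow> real \<Rightarrow> real \<Rightarrow> real"
    and tt :: "nat \<Rightarrow> real" and l1 :: "nat \<Rightarrow> real poly"
  assumes "N \<ge> 1"
    and "vertically_mapped \<nu>"
    and "\<forall>p\<in>ref_wedge. wedge_J \<nu> p > 0"
    and "unisolvent_tri N pr ps" and "lagrange_tri N pr ps ltri"
    and "gll_points N tt" and "lagrange_1d N tt l1"
  shows "\<exists>c::real. (\<forall>p\<in>ref_wedge. geo_tz \<nu> p * wedge_J \<nu> p = c) \<and>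
    (\<forall>a\<in>wedge_idx N. \<forall>b\<in>wedge_idx N.
       mprod (wedge_idx N) (minv (wedge_idx N) (mass_wedge \<nu> ltri l1)) (stiff_z \<nu> ltri l1) a b
       = kron (mprod {1..ntri N} (minv {1..ntri N} (mass_tri \<nu> ltri)) (mass_ref_tri ltri))
              (\<lambda>j j'. c * D1d tt l1 j j') a b)"
proof -
  interpret vertical_wedge \<nu> using assms(2,3) by unfold_locales auto
  let ?I = "{1..ntri N}" and ?J = "{0..N}"
  note mass_wedge = mass_wedge_eq_kron[OF assms(5), unfolded wedge_idx_def]
    and stiff_z = stiff_z_eq_kron[OF assms(5), unfolded wedge_idx_def]
  show ?thesis
  proof (intro exI[of _ "base_det \<nu>"] conjI ballI)
    fix p assume "p \<in> ref_wedge"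
    then show "geo_tz \<nu> p * wedge_J \<nu> p = base_det \<nu>"
      using wedge_J_pos[of p] by (intro geo_tz_mult_wedge_J vertically_mapped) auto
  next
    fix a b assume "a \<in> wedge_idx N" "b \<in> wedge_idx N"
    then obtain i j i' j' where ab: "a = (i,j)" "b = (i',j')"
      and ij: "(i,j) \<in> ?I \<times> ?J" "(i',j') \<in> ?I \<times> ?J"
      by (auto simp: wedge_idx_def)
    have "mprod (wedge_idx N) (minv (wedge_idx N) (mass_wedge \<nu> ltri l1)) (stiff_z \<nu> ltri l1) a b
        = mprod ?I (minv ?I (mass_tri \<nu> ltri)) (\<lambda>i i'. base_det \<nu> * mass_ref_tri ltri i i') i i'
          * mprod ?J (minv ?J (mass_1d l1)) (stiff_1d l1) j j'"
      unfolding ab wedge_idx_def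
      by (rule mprod_minv_kron[OF _ _ is_minv_mass_tri[OF assms(5)] is_minv_mass_1d[OF assms(6,7)]
            mass_wedge stiff_z ij]) auto
    also have "\<dots> = kron (mprod ?I (minv ?I (mass_tri \<nu> ltri)) (mass_ref_tri ltri))
        (\<lambda>j j'. base_det \<nu> * D1d tt l1 j j') a b"
      using minv_mass_1d_stiff_1d[OF assms(6,7)] ij
      by (simp add: ab kron_def mprod_def sum_distrib_left mult_ac)
    finally show "mprod (wedge_idx N) (minv (wedge_idx N) (mass_wedge \<nu> ltri l1)) (stiff_z \<nu> ltri l1) a b
        = kron (mprod ?I (minv ?I (mass_tri \<nu> ltri)) (mass_ref_tri ltri))
            (\<lambda>j j'. base_det \<nu> * D1d tt l1 j j') a b" .
  qed
qed

end
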